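(* In the setting described in the context, assume $\sum_{j\in J}a_{ij}\hat{x}_j\ge b_i$ for all $i\in I$. For each $i\in I$ let $t_i$ be the optimal value and $(\Gamma^{(i)},\varphi^{(i)})$ an optimal solution of \[ \min_{\Gamma,\varphi}\ \sum_{j\in J}a_{ij}\hat{x}_j-\sum_{j\in J_i}\alpha_{ij}|\hat{x}_j|\varphi_{ij}-b_i \] subject to $\sum_{j\in J_i}\varphi_{ij}\le\Gamma_i$; $0\le\varphi_{ij}\le1$ for all $j\in J_i$; $\Gamma\in\Theta\cap\Omega$. Let $i^*\in\arg\min_{i\in I}t_i$ and $\Gamma^*=\Gamma^{(i^* )}$. Then the optimal value of RLO-CCU-DG is $t_{i^*}$, and an optimal solution has $\Gamma=\Gamma^*$, $c=\bar{a}_{i^*}(\Gamma^*_{i^*},\hat{x})$, $\pi=e_{i^*}$. Moreover, if for every $i\in I$ either $|a_{ij}|>\alpha_{ij}$ for some $j\in J_i$ or $a_{ij}\neq0$ for some $j\in J\setminus J_i$, then $c\neq0$ and $\bar{a}_i(\Gamma_i,x)\neq0$ for all $i\in I$ and all $x\in\mathbb{R}^n$.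
   Context: Let $I=\{1,\dots,m\}$, $J=\{1,\dots,n\}$. Given are $a_{ij}\in\mathbb{R}$, $b\in\mathbb{R}^m$, index sets $J_i\subseteq J$, nonnegative numbers $\alpha_{ij}$ ($j\in J_i,i\in I$), an observed point $\hat{x}\in\mathbb{R}^n$, and a convex set $\Omega\subseteq\mathbb{R}^m$. Let $\mathrm{sgn}(t)=1$ if $t\ge0$ and $-1$ otherwise; $e_i$ is the $i$-th unit vector of $\mathbb{R}^m$. For $i\in I$ and $x\in\mathbb{R}^n$ let $j^i_1(x),\dots,j^i_{|J_i|}(x)$ order $J_i$ so that $\alpha_{ij^i_k(x)}|x_{j^i_k(x)}|$ is the $k$-th largest element of $\{\alpha_{ij}|x_j|\}_{j\in J_i}$. For $\Gamma_i\in[0,|J_i|]$ let $P_i(\Gamma_i,x)=\sum_{k=1}^{\lfloor\Gamma_i\rfloor}\alpha_{ij^i_k(x)}|x_{j^i_k(x)}|+(\Gamma_i-\lfloor\Gamma_i\rfloor)\alpha_{ij^i_{\lceil\Gamma_i\rceil}(x)}|x_{j^i_{\lceil\Gamma_i\rceil}(x)}|$ (last term $0$ for integer $\Gamma_i$), and define $\bar{a}_i(\Gamma_i,x)\in\mathbb{R}^n$ by $\bar{a}_{ij}(\Gamma_i,x)=a_{ij}-\mathrm{sgn}(x_j)\alpha_{ij}$ if $j=j^i_k(x)$ for some $k\in\{1,\dots,\lfloor\Gamma_i\rfloor\}$; $\bar{a}_{ij}(\Gamma_i,x)=a_{ij}-\mathrm{sgn}(x_j)\alpha_{ij}(\Gamma_i-\lfloor\Gamma_i\rfloor)$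 if $j=j^i_{\lfloor\Gamma_i\rfloor+1}(x)$; and $\bar{a}_{ij}(\Gamma_i,x)=a_{ij}$ otherwise. Let $s_i=\sum_{j\in J}a_{ij}\hat{x}_j-b_i$, $\hat{I}=\{i\in I:0\le s_i\le\sum_{j\in J_i}\alpha_{ij}|\hat{x}_j|\}$, and for $i\in\hat{I}$ let $\underline{\Gamma}_i=\min\{\sum_{j\in J_i}w_j:\sum_{j\in J_i}\alpha_{ij}|\hat{x}_j|w_j=s_i,\ 0\le w_j\le1\}$, so $s_i=P_i(\underline{\Gamma}_i,\hat{x})$. Standing assumption: for each $i\in\hat{I}$, $\underline{\Gamma}_i$ is the unique $\Gamma_i\in[0,|J_i|]$ with $s_i=P_i(\Gamma_i,\hat{x})$. Let $\Theta=\{\Gamma\in\mathbb{R}^m:\Gamma_i\in[0,\underline{\Gamma}_i]\ \forall i\in\hat{I};\ \Gamma_i\in[0,|J_i|]\ \forall i\in I\setminus\hat{I}\}$. The problem RLO-CCU-DG is \[ \min_{\Gamma,c,u,y,z,\pi,\varphi,\lambda,\mu}\ \sum_{j\in J}c_j\hat{x}_j-\sum_{i\in I}b_i\pi_i \] subject to: $\Gamma\in\Omega$; $\alpha_{ij}\hat{x}_j+u_{ij}\ge0$ and $-\alpha_{ij}\hat{x}_j+u_{ij}\ge0$ ($j\in J_i,i\in I$); $y_{ij}+z_i\ge u_{ij}$ ($j\in J_i,i\in I$); $\sum_{j\in J}a_{ij}\hat{x}_j-\sum_{j\in J_i}y_{ij}-\Gamma_iz_i\ge b_i$ ($i\in I$);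 $y_{ij},z_i\ge0$; $0\le\Gamma_i\le|J_i|$ ($i\in I$); $\sum_{i\in I}\pi_i=1$; $\sum_{i\in I}a_{ij}\pi_i+\sum_{i\in I:j\in J_i}\alpha_{ij}(\lambda_{ij}-\mu_{ij})=c_j$ ($j\in J$); $\varphi_{ij}\le\pi_i$ and $\varphi_{ij}=\lambda_{ij}+\mu_{ij}$ ($j\in J_i,i\in I$); $\sum_{j\in J_i}\varphi_{ij}\le\Gamma_i\pi_i$ ($i\in I$); $\pi_i,\varphi_{ij},\lambda_{ij},\mu_{ij}\ge0$ ($j\in J_i,i\in I$). *)

theory Defs
  imports "HOL-Analysis.Analysis"
begin

text \<open>Index sets: I = UNIV :: 'm set, J = UNIV :: 'n set (finite types).
  a i j = a_ij, alpha i j = alpha_ij, Js i = J_i.\<close>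

definition sgnp :: "real \<Rightarrow> real" where
  "sgnp t = (if t \<ge> 0 then 1 else -1)"

text \<open>sg is an ordering j^i_1(x),...,j^i_{|J_i|}(x) of J_i (indexed from 1) such that
  alpha_{i sg k} |x_{sg k}| is the k-th largest element.\<close>
definition valid_order ::
  "('m \<Rightarrow> 'n \<Rightarrow> real) \<Rightarrow> ('m \<Rightarrow> 'n set) \<Rightarrow> 'm \<Rightarrow> real^'n \<Rightarrow> (nat \<Rightarrow> 'n) \<Rightarrow> bool" where
  "valid_order alpha Js i x sg \<longleftrightarrow>
     bij_betw sg {1..card (Js i)} (Js i) \<and>
     (\<forall>k\<in>{1..card (Js i)}. \<forall>l\<in>{1..card (Js i)}. k \<le> l \<longrightarrow>
        alpha i (sg l) * \<bar>x $ sg l\<bar> \<le> alpha i (sg k) * \<bar>x $ sg k\<bar>)"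

definition Pfun ::
  "('m \<Rightarrow> 'n \<Rightarrow> real) \<Rightarrow> ('m \<Rightarrow> real^'n \<Rightarrow> nat \<Rightarrow> 'n) \<Rightarrow> 'm \<Rightarrow> real \<Rightarrow> real^'n \<Rightarrow> real" where
  "Pfun alpha ord i G x =
     (\<Sum>k = 1..nat \<lfloor>G\<rfloor>. alpha i (ord i x k) * \<bar>x $ ord i x k\<bar>) +
     (if G = of_int \<lfloor>G\<rfloor> then 0
      else (G - of_int \<lfloor>G\<rfloor>) * (alpha i (ord i x (nat \<lceil>G\<rceil>)) * \<bar>x $ ord i x (nat \<lceil>G\<rceil>)\<bar>))"

definition abar ::
  "('m \<Rightarrow> 'n \<Rightarrow> real) \<Rightarrow> ('m \<Rightarrow> 'n \<Rightarrow> real) \<Rightarrow> ('m \<Rightarrow> 'n set) \<Rightarrow>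
   ('m \<Rightarrow> real^'n \<Rightarrow> nat \<Rightarrow> 'n) \<Rightarrow> 'm \<Rightarrow> real \<Rightarrow> real^'n \<Rightarrow> real^'n" where
  "abar a alpha Js ord i G x = (\<chi> j.
     if (\<exists>k\<in>{1..nat \<lfloor>G\<rfloor>}. j = ord i x k) then a i j - sgnp (x $ j) * alpha i j
     else if nat \<lfloor>G\<rfloor> + 1 \<le> card (Js i) \<and> j = ord i x (nat \<lfloor>G\<rfloor> + 1)
       then a i j - sgnp (x $ j) * alpha i j * (G - of_int \<lfloor>G\<rfloor>)
     else a i j)"

definition slack :: "('m \<Rightarrow> 'n \<Rightarrow> real) \<Rightarrow> real^'m \<Rightarrow> real^'n \<Rightarrow> 'm \<Rightarrow> real" where
  "slack a b xh i = (\<Sum>j\<in>UNIV. a i j * xh $ j) - b $ i"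

definition Ihat ::
  "('m \<Rightarrow> 'n \<Rightarrow> real) \<Rightarrow> ('m \<Rightarrow> 'n \<Rightarrow> real) \<Rightarrow> ('m \<Rightarrow> 'n set) \<Rightarrow> real^'m \<Rightarrow> real^'n \<Rightarrow> 'm set" where
  "Ihat a alpha Js b xh = {i. 0 \<le> slack a b xh i \<and>
      slack a b xh i \<le> (\<Sum>j\<in>Js i. alpha i j * \<bar>xh $ j\<bar>)}"

definition Gunder ::
  "('m \<Rightarrow> 'n \<Rightarrow> real) \<Rightarrow> ('m \<Rightarrow> 'n \<Rightarrow> real) \<Rightarrow> ('m \<Rightarrow> 'n set) \<Rightarrow> real^'m \<Rightarrow> real^'n \<Rightarrow> 'm \<Rightarrow> real" where
  "Gunder a alpha Js b xh i = Inf {(\<Sum>j\<in>Js i. w j) | w.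
      (\<Sum>j\<in>Js i. alpha i j * \<bar>xh $ j\<bar> * w j) = slack a b xh i \<and>
      (\<forall>j\<in>Js i. 0 \<le> w j \<and> w j \<le> 1)}"

definition Theta ::
  "('m \<Rightarrow> 'n \<Rightarrow> real) \<Rightarrow> ('m \<Rightarrow> 'n \<Rightarrow> real) \<Rightarrow> ('m \<Rightarrow> 'n set) \<Rightarrow> real^'m \<Rightarrow> real^'n \<Rightarrow> (real^'m) set" where
  "Theta a alpha Js b xh = {G.
      (\<forall>i\<in>Ihat a alpha Js b xh. 0 \<le> G $ i \<and> G $ i \<le> Gunder a alpha Js b xh i) \<and>
      (\<forall>i. i \<notin> Ihat a alpha Js b xh \<longrightarrow> 0 \<le> G $ i \<and> G $ i \<le> real (card (Js i)))}"

definition rlo_feasible ::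
  "('m \<Rightarrow> 'n \<Rightarrow> real) \<Rightarrow> ('m \<Rightarrow> 'n \<Rightarrow> real) \<Rightarrow> ('m \<Rightarrow> 'n set) \<Rightarrow> real^'m \<Rightarrow> real^'n \<Rightarrow> (real^'m) set \<Rightarrow>
   real^'m \<Rightarrow> real^'n \<Rightarrow> ('m \<Rightarrow> 'n \<Rightarrow> real) \<Rightarrow> ('m \<Rightarrow> 'n \<Rightarrow> real) \<Rightarrow> real^'m \<Rightarrow> real^'m \<Rightarrow>
   ('m \<Rightarrow> 'n \<Rightarrow> real) \<Rightarrow> ('m \<Rightarrow> 'n \<Rightarrow> real) \<Rightarrow> ('m \<Rightarrow> 'n \<Rightarrow> real) \<Rightarrow> bool" where
  "rlo_feasible a alpha Js b xh Omega G c u y z pv phi lam mu \<longleftrightarrow>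
     G \<in> Omega \<and>
     (\<forall>i. \<forall>j\<in>Js i. alpha i j * xh $ j + u i j \<ge> 0 \<and> - alpha i j * xh $ j + u i j \<ge> 0) \<and>
     (\<forall>i. \<forall>j\<in>Js i. y i j + z $ i \<ge> u i j) \<and>
     (\<forall>i. (\<Sum>j\<in>UNIV. a i j * xh $ j) - (\<Sum>j\<in>Js i. y i j) - G $ i * z $ i \<ge> b $ i) \<and>
     (\<forall>i. \<forall>j\<in>Js i. y i j \<ge> 0) \<and> (\<forall>i. z $ i \<ge> 0) \<and>
     (\<forall>i. 0 \<le> G $ i \<and> G $ i \<le> real (card (Js i))) \<and>
     (\<Sum>i\<in>UNIV. pv $ i) = 1 \<and>
     (\<forall>j. (\<Sum>i\<in>UNIV. a i j * pv $ i) + (\<Sum>i\<in>{i. j \<in> Js i}. alpha i j * (lam i j - mu i j)) = c $ j) \<and>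
     (\<forall>i. \<forall>j\<in>Js i. phi i j \<le> pv $ i \<and> phi i j = lam i j + mu i j) \<and>
     (\<forall>i. (\<Sum>j\<in>Js i. phi i j) \<le> G $ i * pv $ i) \<and>
     (\<forall>i. pv $ i \<ge> 0) \<and>
     (\<forall>i. \<forall>j\<in>Js i. phi i j \<ge> 0 \<and> lam i j \<ge> 0 \<and> mu i j \<ge> 0)"

definition rlo_obj :: "real^'m \<Rightarrow> real^'n \<Rightarrow> real^'n \<Rightarrow> real^'m \<Rightarrow> real" where
  "rlo_obj b xh c pv = (\<Sum>j\<in>UNIV. c $ j * xh $ j) - (\<Sum>i\<in>UNIV. b $ i * pv $ i)"

definition sub_feasible ::
  "('m \<Rightarrow> 'n \<Rightarrow> real) \<Rightarrow> ('m \<Rightarrow> 'n \<Rightarrow> real) \<Rightarrow> ('m \<Rightarrow> 'n set) \<Rightarrow> real^'m \<Rightarrow> real^'n \<Rightarrow> (real^'m) set \<Rightarrow>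
   'm \<Rightarrow> real^'m \<Rightarrow> ('m \<Rightarrow> 'n \<Rightarrow> real) \<Rightarrow> bool" where
  "sub_feasible a alpha Js b xh Omega i G phi \<longleftrightarrow>
     (\<Sum>j\<in>Js i. phi i j) \<le> G $ i \<and>
     (\<forall>j\<in>Js i. 0 \<le> phi i j \<and> phi i j \<le> 1) \<and>
     G \<in> Theta a alpha Js b xh \<inter> Omega"

definition sub_obj ::
  "('m \<Rightarrow> 'n \<Rightarrow> real) \<Rightarrow> ('m \<Rightarrow> 'n \<Rightarrow> real) \<Rightarrow> ('m \<Rightarrow> 'n set) \<Rightarrow> real^'m \<Rightarrow> real^'n \<Rightarrow>
   'm \<Rightarrow> ('m \<Rightarrow> 'n \<Rightarrow> real) \<Rightarrow> real" where
  "sub_obj a alpha Js b xh i phi =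
     (\<Sum>j\<in>UNIV. a i j * xh $ j) - (\<Sum>j\<in>Js i. alpha i j * \<bar>xh $ j\<bar> * phi i j) - b $ i"

end

theory Submission
  imports Defs
begin

text \<open>For a fixed budget \<open>\<Gamma>\<^sub>i\<close>, the worst case of row \<open>i\<close> at the observed point \<open>xh\<close> is the
  fractional knapsack \<open>max {\<Sum>j\<in>J\<^sub>i. \<alpha>\<^sub>i\<^sub>j \<bar>xh\<^sub>j\<bar> \<phi>\<^sub>j | \<Sum>j. \<phi>\<^sub>j \<le> \<Gamma>\<^sub>i, 0 \<le> \<phi> \<le> 1}\<close>. Its value is
  \<open>P\<^sub>i(\<Gamma>\<^sub>i, xh)\<close>, attained by the greedy weights (1 on the \<open>\<lfloor>\<Gamma>\<^sub>i\<rfloor>\<close> largest terms, the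
  fractional part of \<open>\<Gamma>\<^sub>i\<close> on the next one), and its LP dual is solved by taking the next
  largest term as the multiplier \<open>z\<^sub>i\<close> of the budget constraint. Hence the \<open>(u, y, z)\<close>-constraints
  of RLO-CCU-DG are satisfiable iff \<open>P\<^sub>i(\<Gamma>\<^sub>i, xh) \<le> s\<^sub>i\<close> for all \<open>i\<close>, that is, by monotonicity
  of \<open>P\<^sub>i\<close> and uniqueness of the solution of \<open>P\<^sub>i = s\<^sub>i\<close>, iff \<open>\<Gamma> \<in> \<Theta>\<close>. In the remaining
  constraints \<open>\<bar>\<lambda> - \<mu>\<bar> \<le> \<phi> \<le> \<pi>\<close> bound the objective from below by
  \<open>\<Sum>\<^sub>i \<pi>\<^sub>i (s\<^sub>i - P\<^sub>i(\<Gamma>\<^sub>i, xh)) \<ge> \<Sum>\<^sub>i \<pi>\<^sub>i t\<^sub>i \<ge> t\<^sub>i\<^sub>*\<close>, and \<open>\<pi> = e\<^sub>i\<^sub>*\<close> with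
  \<open>c = abar\<^sub>i\<^sub>*(\<Gamma>\<^sup>*, xh)\<close> and the greedy \<open>\<phi>\<close> attains this bound.\<close>

section \<open>Fractional knapsack along a decreasing enumeration\<close>

lemma sum_if_le_or_Suc:
  fixes g h :: "nat \<Rightarrow> real"
  assumes "n \<le> N"
  shows "(\<Sum>k=1..N. if k \<le> n then g k else if k = n + 1 then h k else 0) =
    (\<Sum>k=1..n. g k) + (if n + 1 \<le> N then h (n + 1) else 0)"
proof -
  have "(\<Sum>k=1..N. if k \<le> n then g k else if k = n + 1 then h k else 0) =
      (\<Sum>k=1..N. if k \<le> n then g k else 0) + (\<Sum>k=1..N. if k = n + 1 then h k else 0)"
    by (subst sum.distrib[symmetric]) (rule sum.cong, auto)
  also have "(\<Sum>k=1..N. if k \<le> n then g k else 0) = (\<Sum>k\<in>{1..N} \<inter> {k. k \<le> n}. g k)"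
    by (simp add: sum.inter_restrict)
  also have "{1..N} \<inter> {k. k \<le> n} = {1..n}"
    using assms by auto
  also have "(\<Sum>k=1..N. if k = n + 1 then h k else 0) = (if n + 1 \<le> N then h (n + 1) else 0)"
    by (subst sum.delta) auto
  finally show ?thesis .
qed

definition greedy_weight :: "(nat \<Rightarrow> 'n) \<Rightarrow> nat \<Rightarrow> real \<Rightarrow> 'n \<Rightarrow> real" where
  "greedy_weight sg N G j =
     (if \<exists>k\<in>{1..nat \<lfloor>G\<rfloor>}. j = sg k then 1
      else if nat \<lfloor>G\<rfloor> + 1 \<le> N \<and> j = sg (nat \<lfloor>G\<rfloor> + 1) then G - of_int \<lfloor>G\<rfloor>
      else 0)"

definition top_sum :: "('n \<Rightarrow> real) \<Rightarrow> (nat \<Rightarrow> 'n) \<Rightarrow> real \<Rightarrow> real" where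
  "top_sum v sg G =
     (\<Sum>k = 1..nat \<lfloor>G\<rfloor>. v (sg k)) +
     (if G = of_int \<lfloor>G\<rfloor> then 0 else (G - of_int \<lfloor>G\<rfloor>) * v (sg (nat \<lceil>G\<rceil>)))"

text \<open>The optimal multiplier of the budget constraint in the LP dual of
  \<open>max {\<Sum>j\<in>S. v j * \<phi> j | \<Sum>j\<in>S. \<phi> j \<le> G, 0 \<le> \<phi> \<le> 1}\<close>.\<close>
definition top_threshold :: "('n \<Rightarrow> real) \<Rightarrow> (nat \<Rightarrow> 'n) \<Rightarrow> nat \<Rightarrow> real \<Rightarrow> real" where
  "top_threshold v sg N G = (if nat \<lfloor>G\<rfloor> + 1 \<le> N then v (sg (nat \<lfloor>G\<rfloor> + 1)) else 0)"

lemma greedy_weight_bounds: "0 \<le> greedy_weight sg N G j \<and> greedy_weight sg N G j \<le> 1"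
proof -
  have "0 \<le> G - of_int \<lfloor>G\<rfloor>" "G - of_int \<lfloor>G\<rfloor> \<le> 1" by linarith+
  then show ?thesis unfolding greedy_weight_def by auto
qed

lemma top_sum_eq:
  assumes "0 \<le> G" "G \<le> real N"
  shows "top_sum v sg G = (\<Sum>k=1..nat \<lfloor>G\<rfloor>. v (sg k)) +
    (if nat \<lfloor>G\<rfloor> + 1 \<le> N then (G - of_int \<lfloor>G\<rfloor>) * v (sg (nat \<lfloor>G\<rfloor> + 1)) else 0)"
proof (cases "G = of_int \<lfloor>G\<rfloor>")
  case True
  then show ?thesis by (simp add: top_sum_def)
next
  case False
  then have "nat \<lceil>G\<rceil> = nat \<lfloor>G\<rfloor> + 1"
    using assms(1) by (simp add: ceiling_altdef nat_add_distrib)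
  moreover have "nat \<lfloor>G\<rfloor> + 1 \<le> N"
    using False assms of_int_floor_le[of G] by linarith
  ultimately show ?thesis using False by (simp add: top_sum_def)
qed

locale decreasing_enumeration =
  fixes sg :: "nat \<Rightarrow> 'n" and N :: nat and S :: "'n set" and v :: "'n \<Rightarrow> real"
  assumes bij: "bij_betw sg {1..N} S"
    and nonneg: "\<And>j. j \<in> S \<Longrightarrow> 0 \<le> v j"
    and decreasing: "\<And>k l. k \<in> {1..N} \<Longrightarrow> l \<in> {1..N} \<Longrightarrow> k \<le> l \<Longrightarrow> v (sg l) \<le> v (sg k)"
begin

lemma sum_reindex: "sum f S = (\<Sum>k=1..N. f (sg k))"
  using sum.reindex_bij_betw[OF bij, of f] by simp

context
  fixes G :: real
  assumes G_nonneg: "0 \<le> G" and G_le: "G \<le> real N"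
begin

lemma nat_floor_le: "nat \<lfloor>G\<rfloor> \<le> N"
  using G_le by (simp add: nat_le_iff floor_le_iff)

lemma greedy_weight_enum:
  assumes k: "k \<in> {1..N}"
  shows "greedy_weight sg N G (sg k) =
    (if k \<le> nat \<lfloor>G\<rfloor> then 1 else if k = nat \<lfloor>G\<rfloor> + 1 then G - of_int \<lfloor>G\<rfloor> else 0)"
proof -
  have inj: "inj_on sg {1..N}" using bij bij_betw_def by blast
  have "(\<exists>k'\<in>{1..nat \<lfloor>G\<rfloor>}. sg k = sg k') \<longleftrightarrow> k \<le> nat \<lfloor>G\<rfloor>"
    using k nat_floor_le inj_onD[OF inj] by fastforce
  moreover have "nat \<lfloor>G\<rfloor> + 1 \<le> N \<Longrightarrow> sg k = sg (nat \<lfloor>G\<rfloor> + 1) \<longleftrightarrow> k = nat \<lfloor>G\<rfloor> + 1"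
    using k inj_onD[OF inj] by fastforce
  ultimately show ?thesis using k unfolding greedy_weight_def by auto
qed

lemma greedy_weight_outside: "j \<notin> S \<Longrightarrow> greedy_weight sg N G j = 0"
  using bij_betwE[OF bij] nat_floor_le unfolding greedy_weight_def by fastforce

lemma sum_mult_greedy_weight: "(\<Sum>j\<in>S. f j * greedy_weight sg N G j) = top_sum f sg G"
proof -
  have "(\<Sum>j\<in>S. f j * greedy_weight sg N G j) =
      (\<Sum>k=1..N. if k \<le> nat \<lfloor>G\<rfloor> then f (sg k) else if k = nat \<lfloor>G\<rfloor> + 1
         then (G - of_int \<lfloor>G\<rfloor>) * f (sg k) else 0)"
    unfolding sum_reindex by (rule sum.cong) (auto simp: greedy_weight_enum)
  also have "\<dots> = top_sum f sg G"
    by (simp only: sum_if_le_or_Suc[OF nat_floor_le] top_sum_eq[OF G_nonneg G_le])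
  finally show ?thesis .
qed

lemma sum_greedy_weight: "(\<Sum>j\<in>S. greedy_weight sg N G j) = G"
  using sum_mult_greedy_weight[of "\<lambda>_. 1"] G_nonneg by (simp add: top_sum_def)

lemma top_threshold_nonneg: "0 \<le> top_threshold v sg N G"
  unfolding top_threshold_def using nonneg bij_betwE[OF bij] by fastforce

lemma top_sum_strong_duality:
  "(\<Sum>j\<in>S. max (v j - top_threshold v sg N G) 0) + top_threshold v sg N G * G = top_sum v sg G"
proof (cases "nat \<lfloor>G\<rfloor> + 1 \<le> N")
  case True
  define n where "n = nat \<lfloor>G\<rfloor>"
  define \<theta> where "\<theta> = v (sg (n + 1))"
  have "(\<Sum>j\<in>S. max (v j - \<theta>) 0) =
      (\<Sum>k=1..N. if k \<le> n then v (sg k) - \<theta> else if k = n + 1 then 0 else 0)"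
    unfolding sum_reindex
  proof (rule sum.cong)
    fix k assume k: "k \<in> {1..N}"
    show "max (v (sg k) - \<theta>) 0 = (if k \<le> n then v (sg k) - \<theta> else if k = n + 1 then 0 else 0)"
      using decreasing[OF k, of "n + 1"] decreasing[OF _ k, of "n + 1"] k True
      unfolding \<theta>_def n_def by (cases "k \<le> n + 1") auto
  qed simp
  also have "\<dots> = (\<Sum>k=1..n. v (sg k)) - real n * \<theta>"
    using sum_if_le_or_Suc[OF nat_floor_le, of "\<lambda>k. v (sg k) - \<theta>" "\<lambda>_. 0"]
    unfolding n_def by (simp add: sum_subtractf)
  moreover have "top_sum v sg G = (\<Sum>k=1..n. v (sg k)) + (G - real n) * \<theta>"
    using True top_sum_eq[OF G_nonneg G_le] G_nonneg unfolding \<theta>_def n_def by simp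
  moreover have "top_threshold v sg N G = \<theta>"
    using True unfolding top_threshold_def \<theta>_def n_def by simp
  ultimately show ?thesis by (simp add: algebra_simps)
next
  case False
  then have "nat \<lfloor>G\<rfloor> = N"
    using nat_floor_le by linarith
  then show ?thesis
    using False nonneg by (simp add: top_threshold_def sum_reindex top_sum_eq[OF G_nonneg G_le])
qed

lemma sum_mult_le_top_sum:
  assumes \<phi>: "\<And>j. j \<in> S \<Longrightarrow> 0 \<le> \<phi> j \<and> \<phi> j \<le> p"
    and budget: "(\<Sum>j\<in>S. \<phi> j) \<le> G * p"
  shows "(\<Sum>j\<in>S. v j * \<phi> j) \<le> p * top_sum v sg G"
proof -
  define \<theta> where "\<theta> = top_threshold v sg N G"
  have "(\<Sum>j\<in>S. v j * \<phi> j) \<le> (\<Sum>j\<in>S. p * max (v j - \<theta>) 0 + \<theta> * \<phi> j)"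
  proof (rule sum_mono)
    fix j assume j: "j \<in> S"
    have "(v j - \<theta>) * \<phi> j \<le> max (v j - \<theta>) 0 * p"
    proof (cases "v j \<le> \<theta>")
      case True
      then show ?thesis using \<phi>[OF j] by (simp add: mult_nonpos_nonneg)
    next
      case False
      then show ?thesis using \<phi>[OF j] by (simp add: mult_left_mono)
    qed
    then show "v j * \<phi> j \<le> p * max (v j - \<theta>) 0 + \<theta> * \<phi> j"
      by (simp add: algebra_simps)
  qed
  also have "\<dots> \<le> p * (\<Sum>j\<in>S. max (v j - \<theta>) 0) + \<theta> * (G * p)"
    using budget top_threshold_nonneg
    by (simp add: sum.distrib sum_distrib_left[symmetric] mult_left_mono \<theta>_def)
  also have "\<dots> = p * ((\<Sum>j\<in>S. max (v j - \<theta>) 0) + \<theta> * G)"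
    by (simp add: algebra_simps)
  also have "\<dots> = p * top_sum v sg G"
    using top_sum_strong_duality unfolding \<theta>_def by simp
  finally show ?thesis .
qed

lemma top_sum_weak_duality:
  assumes "\<And>j. j \<in> S \<Longrightarrow> v j \<le> y j + z" and "\<And>j. j \<in> S \<Longrightarrow> 0 \<le> y j"
  shows "top_sum v sg G \<le> (\<Sum>j\<in>S. y j) + G * z"
proof -
  let ?w = "greedy_weight sg N G"
  have "top_sum v sg G = (\<Sum>j\<in>S. v j * ?w j)"
    by (rule sum_mult_greedy_weight[symmetric])
  also have "\<dots> \<le> (\<Sum>j\<in>S. y j + z * ?w j)"
  proof (rule sum_mono)
    fix j assume j: "j \<in> S"
    have "v j * ?w j \<le> (y j + z) * ?w j"
      using assms(1)[OF j] greedy_weight_bounds[of sg N G j] by (simp add: mult_right_mono)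
    also have "\<dots> \<le> y j + z * ?w j"
      using assms(2)[OF j] greedy_weight_bounds[of sg N G j] by (simp add: algebra_simps mult_left_le)
    finally show "v j * ?w j \<le> y j + z * ?w j" .
  qed
  also have "\<dots> = (\<Sum>j\<in>S. y j) + G * z"
    by (simp add: sum.distrib sum_distrib_left[symmetric] sum_greedy_weight)
  finally show ?thesis .
qed

lemma top_sum_le_sum: "top_sum v sg G \<le> (\<Sum>j\<in>S. v j)"
  using top_sum_weak_duality[of v 0] nonneg by simp

end

lemma top_sum_mono:
  assumes "0 \<le> G1" "G1 \<le> G2" "G2 \<le> real N"
  shows "top_sum v sg G1 \<le> top_sum v sg G2"
proof -
  have G1: "G1 \<le> real N" using assms by linarith
  have "top_sum v sg G1 = (\<Sum>j\<in>S. v j * greedy_weight sg N G1 j)"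
    using sum_mult_greedy_weight[OF assms(1) G1] by simp
  also have "\<dots> \<le> 1 * top_sum v sg G2"
    using assms greedy_weight_bounds[of sg N G1] sum_greedy_weight[OF assms(1) G1]
    by (intro sum_mult_le_top_sum) auto
  finally show ?thesis by simp
qed

end

section \<open>Reformulation of RLO-CCU-DG\<close>

lemma sgnp_mult_self: "sgnp t * t = \<bar>t\<bar>"
  by (simp add: sgnp_def)

lemma abs_sgnp: "\<bar>sgnp t\<bar> = 1"
  by (simp add: sgnp_def)

lemma Pfun_eq_top_sum: "Pfun alpha ord i G x = top_sum (\<lambda>j. alpha i j * \<bar>x $ j\<bar>) (ord i x) G"
  by (simp add: Pfun_def top_sum_def)

lemma abar_eq_greedy_weight:
  "abar a alpha Js ord i G x $ j =
     a i j - sgnp (x $ j) * alpha i j * greedy_weight (ord i x) (card (Js i)) G j"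
  by (simp add: abar_def greedy_weight_def)

lemma valid_order_imp_decreasing_enumeration:
  assumes "valid_order alpha Js i x sg" and "\<And>j. j \<in> Js i \<Longrightarrow> 0 \<le> alpha i j"
  shows "decreasing_enumeration sg (card (Js i)) (Js i) (\<lambda>j. alpha i j * \<bar>x $ j\<bar>)"
  using assms unfolding valid_order_def decreasing_enumeration_def by auto

text \<open>In the \<open>(u, y, z)\<close>-part of RLO-CCU-DG, \<open>(y, z)\<close> is an LP-dual certificate that every row
  holds at \<open>xh\<close> under every deviation within the budget \<open>G\<close>.\<close>
definition robust_primal_feasible ::
  "('m \<Rightarrow> 'n \<Rightarrow> real) \<Rightarrow> ('m \<Rightarrow> 'n \<Rightarrow> real) \<Rightarrow> ('m \<Rightarrow> 'n set) \<Rightarrow> real^'m \<Rightarrow> real^'n \<Rightarrow>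
   real^'m \<Rightarrow> ('m \<Rightarrow> 'n \<Rightarrow> real) \<Rightarrow> ('m \<Rightarrow> 'n \<Rightarrow> real) \<Rightarrow> real^'m \<Rightarrow> bool" where
  "robust_primal_feasible a alpha Js b xh G u y z \<longleftrightarrow>
     (\<forall>i. \<forall>j\<in>Js i. alpha i j * xh $ j + u i j \<ge> 0 \<and> - alpha i j * xh $ j + u i j \<ge> 0) \<and>
     (\<forall>i. \<forall>j\<in>Js i. y i j + z $ i \<ge> u i j) \<and>
     (\<forall>i. (\<Sum>j\<in>UNIV. a i j * xh $ j) - (\<Sum>j\<in>Js i. y i j) - G $ i * z $ i \<ge> b $ i) \<and>
     (\<forall>i. \<forall>j\<in>Js i. y i j \<ge> 0) \<and> (\<forall>i. z $ i \<ge> 0)"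

definition rlo_dual_feasible ::
  "('m \<Rightarrow> 'n \<Rightarrow> real) \<Rightarrow> ('m \<Rightarrow> 'n \<Rightarrow> real) \<Rightarrow> ('m \<Rightarrow> 'n set) \<Rightarrow> real^'m \<Rightarrow> real^'n \<Rightarrow>
   real^'m \<Rightarrow> ('m \<Rightarrow> 'n \<Rightarrow> real) \<Rightarrow> ('m \<Rightarrow> 'n \<Rightarrow> real) \<Rightarrow> ('m \<Rightarrow> 'n \<Rightarrow> real) \<Rightarrow> bool" where
  "rlo_dual_feasible a alpha Js G c pv phi lam mu \<longleftrightarrow>
     (\<Sum>i\<in>UNIV. pv $ i) = 1 \<and>
     (\<forall>j. (\<Sum>i\<in>UNIV. a i j * pv $ i) + (\<Sum>i\<in>{i. j \<in> Js i}. alpha i j * (lam i j - mu i j)) = c $ j) \<and>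
     (\<forall>i. \<forall>j\<in>Js i. phi i j \<le> pv $ i \<and> phi i j = lam i j + mu i j) \<and>
     (\<forall>i. (\<Sum>j\<in>Js i. phi i j) \<le> G $ i * pv $ i) \<and>
     (\<forall>i. pv $ i \<ge> 0) \<and>
     (\<forall>i. \<forall>j\<in>Js i. phi i j \<ge> 0 \<and> lam i j \<ge> 0 \<and> mu i j \<ge> 0)"

lemma rlo_feasible_iff:
  "rlo_feasible a alpha Js b xh Omega G c u y z pv phi lam mu \<longleftrightarrow>
     G \<in> Omega \<and> robust_primal_feasible a alpha Js b xh G u y z \<and>
     (\<forall>i. 0 \<le> G $ i \<and> G $ i \<le> real (card (Js i))) \<and> rlo_dual_feasible a alpha Js G c pv phi lam mu"
  unfolding rlo_feasible_def robust_primal_feasible_def rlo_dual_feasible_def by (simp only: conj_assoc)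

context
  fixes a alpha :: "'m::finite \<Rightarrow> 'n::finite \<Rightarrow> real" and Js :: "'m \<Rightarrow> 'n set"
    and b :: "real^'m" and xh :: "real^'n"
begin

lemma Gunder_bounds:
  assumes "i \<in> Ihat a alpha Js b xh"
  shows "0 \<le> Gunder a alpha Js b xh i \<and> Gunder a alpha Js b xh i \<le> real (card (Js i))"
proof -
  define X where "X = {(\<Sum>j\<in>Js i. w j) | w.
      (\<Sum>j\<in>Js i. alpha i j * \<bar>xh $ j\<bar> * w j) = slack a b xh i \<and> (\<forall>j\<in>Js i. 0 \<le> w j \<and> w j \<le> 1)}"
  define T where "T = (\<Sum>j\<in>Js i. alpha i j * \<bar>xh $ j\<bar>)"
  have s: "0 \<le> slack a b xh i" "slack a b xh i \<le> T"
    using assms unfolding Ihat_def T_def by auto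
  have X_bounds: "0 \<le> x \<and> x \<le> real (card (Js i))" if "x \<in> X" for x
  proof -
    obtain w where x: "x = (\<Sum>j\<in>Js i. w j)" and w: "\<forall>j\<in>Js i. 0 \<le> w j \<and> w j \<le> 1"
      using \<open>x \<in> X\<close> unfolding X_def by blast
    then show ?thesis using sum_nonneg[of "Js i" w] sum_bounded_above[of "Js i" w 1] by simp
  qed
  define w :: "'n \<Rightarrow> real" where "w j = (if T = 0 then 0 else slack a b xh i / T)" for j
  have "(\<Sum>j\<in>Js i. alpha i j * \<bar>xh $ j\<bar> * w j) = slack a b xh i"
  proof (cases "T = 0")
    case True
    then show ?thesis using s by (simp add: w_def)
  next
    case False
    then have "(\<Sum>j\<in>Js i. alpha i j * \<bar>xh $ j\<bar> * w j) = (\<Sum>j\<in>Js i. alpha i j * \<bar>xh $ j\<bar>) * (slack a b xh i / T)"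
      by (simp add: w_def sum_distrib_right sum_divide_distrib)
    also have "\<dots> = slack a b xh i"
      using False by (simp add: T_def[symmetric])
    finally show ?thesis .
  qed
  moreover have "\<forall>j\<in>Js i. 0 \<le> w j \<and> w j \<le> 1"
    unfolding w_def using s by auto
  ultimately have witness: "(\<Sum>j\<in>Js i. w j) \<in> X"
    unfolding X_def by blast
  have "bdd_below X"
    using X_bounds by (intro bdd_belowI[of _ 0]) auto
  then have "Inf X \<le> real (card (Js i))"
    using cInf_lower[OF witness] X_bounds[OF witness] by linarith
  moreover have "0 \<le> Inf X"
    using witness X_bounds by (intro cInf_greatest) auto
  ultimately show ?thesis
    unfolding Gunder_def X_def by simp
qed

lemma Theta_bounds:
  assumes "G \<in> Theta a alpha Js b xh"
  shows "0 \<le> G $ i \<and> G $ i \<le> real (card (Js i))"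
proof (cases "i \<in> Ihat a alpha Js b xh")
  case True
  then show ?thesis using assms Gunder_bounds[OF True] unfolding Theta_def by fastforce
next
  case False
  then show ?thesis using assms unfolding Theta_def by blast
qed

end

locale budget_uncertainty =
  fixes a alpha :: "'m::finite \<Rightarrow> 'n::finite \<Rightarrow> real" and Js :: "'m \<Rightarrow> 'n set"
    and b :: "real^'m" and xh :: "real^'n"
  assumes alpha_nonneg: "\<And>i j. j \<in> Js i \<Longrightarrow> alpha i j \<ge> 0"
begin

lemma rlo_dual_feasible_c_mult_ge:
  assumes dual: "rlo_dual_feasible a alpha Js G c pv phi lam mu"
  shows "(\<Sum>i\<in>UNIV. a i j * pv $ i) * xh $ j - (\<Sum>i\<in>{i. j \<in> Js i}. alpha i j * \<bar>xh $ j\<bar> * phi i j)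
    \<le> c $ j * xh $ j"
proof -
  have c_eq: "c $ j = (\<Sum>i\<in>UNIV. a i j * pv $ i) + (\<Sum>i\<in>{i. j \<in> Js i}. alpha i j * (lam i j - mu i j))"
    and phi_eq: "\<And>i. j \<in> Js i \<Longrightarrow> phi i j = lam i j + mu i j"
    and lam_mu_nonneg: "\<And>i. j \<in> Js i \<Longrightarrow> 0 \<le> lam i j \<and> 0 \<le> mu i j"
    using dual unfolding rlo_dual_feasible_def by auto
  have "- (alpha i j * \<bar>xh $ j\<bar> * phi i j) \<le> alpha i j * (lam i j - mu i j) * xh $ j"
    if "j \<in> Js i" for i
  proof -
    have "\<bar>alpha i j * (lam i j - mu i j) * xh $ j\<bar> = alpha i j * \<bar>xh $ j\<bar> * \<bar>lam i j - mu i j\<bar>"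
      using alpha_nonneg[OF that] by (simp add: abs_mult)
    also have "\<dots> \<le> alpha i j * \<bar>xh $ j\<bar> * phi i j"
      using alpha_nonneg[OF that] phi_eq[OF that] lam_mu_nonneg[OF that]
      by (intro mult_left_mono) auto
    finally show ?thesis by linarith
  qed
  then have "(\<Sum>i\<in>{i. j \<in> Js i}. - (alpha i j * \<bar>xh $ j\<bar> * phi i j)) \<le>
      (\<Sum>i\<in>{i. j \<in> Js i}. alpha i j * (lam i j - mu i j) * xh $ j)"
    by (intro sum_mono) auto
  then show ?thesis
    unfolding c_eq sum_negf distrib_right sum_distrib_right by linarith
qed

lemma rlo_obj_ge_weighted_slack:
  assumes dual: "rlo_dual_feasible a alpha Js G c pv phi lam mu"
  shows "(\<Sum>i\<in>UNIV. pv $ i * slack a b xh i - (\<Sum>j\<in>Js i. alpha i j * \<bar>xh $ j\<bar> * phi i j))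
    \<le> rlo_obj b xh c pv"
proof -
  define V where "V i j = alpha i j * \<bar>xh $ j\<bar> * phi i j" for i j
  have slack_swap: "(\<Sum>i\<in>UNIV. pv $ i * slack a b xh i) =
      (\<Sum>j\<in>UNIV. (\<Sum>i\<in>UNIV. a i j * pv $ i) * xh $ j) - (\<Sum>i\<in>UNIV. b $ i * pv $ i)"
  proof -
    have "(\<Sum>i\<in>UNIV. pv $ i * slack a b xh i) =
        (\<Sum>i\<in>UNIV. \<Sum>j\<in>UNIV. a i j * pv $ i * xh $ j) - (\<Sum>i\<in>UNIV. b $ i * pv $ i)"
      by (simp add: slack_def right_diff_distrib sum_subtractf sum_distrib_left mult_ac)
    also have "(\<Sum>i\<in>UNIV. \<Sum>j\<in>UNIV. a i j * pv $ i * xh $ j) = (\<Sum>j\<in>UNIV. (\<Sum>i\<in>UNIV. a i j * pv $ i) * xh $ j)"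
      by (subst sum.swap) (simp add: sum_distrib_right)
    finally show ?thesis .
  qed
  have V_swap: "(\<Sum>i\<in>UNIV. \<Sum>j\<in>Js i. V i j) = (\<Sum>j\<in>UNIV. \<Sum>i\<in>{i. j \<in> Js i}. V i j)"
    using sum.swap_restrict[of "UNIV :: 'm set" "UNIV :: 'n set" V "\<lambda>i j. j \<in> Js i"] by simp
  have "(\<Sum>i\<in>UNIV. pv $ i * slack a b xh i - (\<Sum>j\<in>Js i. V i j)) =
      (\<Sum>j\<in>UNIV. (\<Sum>i\<in>UNIV. a i j * pv $ i) * xh $ j - (\<Sum>i\<in>{i. j \<in> Js i}. V i j))
      - (\<Sum>i\<in>UNIV. b $ i * pv $ i)"
    using slack_swap V_swap by (simp add: sum_subtractf)
  also have "\<dots> \<le> (\<Sum>j\<in>UNIV. c $ j * xh $ j) - (\<Sum>i\<in>UNIV. b $ i * pv $ i)"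
    using rlo_dual_feasible_c_mult_ge[OF dual] unfolding V_def by (simp add: sum_mono)
  finally show ?thesis
    unfolding V_def rlo_obj_def .
qed

end

locale sorted_budget_uncertainty = budget_uncertainty +
  fixes ord :: "'m::finite \<Rightarrow> real^'n::finite \<Rightarrow> nat \<Rightarrow> 'n"
  assumes ord_valid: "\<And>i x. valid_order alpha Js i x (ord i x)"
begin

lemma ord_decreasing_enumeration:
  "decreasing_enumeration (ord i x) (card (Js i)) (Js i) (\<lambda>j. alpha i j * \<bar>x $ j\<bar>)"
  using valid_order_imp_decreasing_enumeration[OF ord_valid alpha_nonneg] .

lemma abar_nonzero:
  assumes G: "0 \<le> G" "G \<le> real (card (Js i))"
    and a_large: "(\<exists>j\<in>Js i. alpha i j < \<bar>a i j\<bar>) \<or> (\<exists>j. j \<notin> Js i \<and> a i j \<noteq> 0)"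
  shows "abar a alpha Js ord i G x \<noteq> 0"
proof -
  let ?w = "greedy_weight (ord i x) (card (Js i)) G"
  have "\<exists>j. abar a alpha Js ord i G x $ j \<noteq> 0"
    using a_large
  proof (elim disjE bexE exE conjE)
    fix j assume j: "j \<in> Js i" "alpha i j < \<bar>a i j\<bar>"
    have "\<bar>sgnp (x $ j) * alpha i j * ?w j\<bar> \<le> alpha i j"
      using greedy_weight_bounds[of "ord i x" "card (Js i)" G j] alpha_nonneg[OF j(1)]
      by (simp add: abs_mult abs_sgnp mult_left_le)
    then have "a i j \<noteq> sgnp (x $ j) * alpha i j * ?w j"
      using j(2) by auto
    then have "abar a alpha Js ord i G x $ j \<noteq> 0"
      by (simp add: abar_eq_greedy_weight)
    then show ?thesis ..
  next
    fix j assume "j \<notin> Js i" "a i j \<noteq> 0"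
    then have "abar a alpha Js ord i G x $ j \<noteq> 0"
      using decreasing_enumeration.greedy_weight_outside[OF ord_decreasing_enumeration G]
      by (simp add: abar_eq_greedy_weight)
    then show ?thesis ..
  qed
  then show ?thesis by auto
qed

lemma robust_primal_feasible_imp_Pfun_le_slack:
  assumes feas: "robust_primal_feasible a alpha Js b xh G u y z"
    and G: "0 \<le> G $ i" "G $ i \<le> real (card (Js i))"
  shows "Pfun alpha ord i (G $ i) xh \<le> slack a b xh i"
proof -
  have u_lower: "\<And>j. j \<in> Js i \<Longrightarrow> 0 \<le> alpha i j * xh $ j + u i j \<and> 0 \<le> - alpha i j * xh $ j + u i j"
    and yz_ge_u: "\<And>j. j \<in> Js i \<Longrightarrow> u i j \<le> y i j + z $ i"
    and row: "b $ i \<le> (\<Sum>j\<in>UNIV. a i j * xh $ j) - (\<Sum>j\<in>Js i. y i j) - G $ i * z $ i"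
    and y_nonneg: "\<And>j. j \<in> Js i \<Longrightarrow> 0 \<le> y i j"
    using feas unfolding robust_primal_feasible_def by auto
  have "alpha i j * \<bar>xh $ j\<bar> \<le> y i j + z $ i" if j: "j \<in> Js i" for j
  proof -
    have "alpha i j * \<bar>xh $ j\<bar> \<le> u i j"
      using u_lower[OF j] alpha_nonneg[OF j] by (cases "0 \<le> xh $ j") auto
    then show ?thesis using yz_ge_u[OF j] by linarith
  qed
  then have "Pfun alpha ord i (G $ i) xh \<le> (\<Sum>j\<in>Js i. y i j) + G $ i * z $ i"
    using decreasing_enumeration.top_sum_weak_duality[OF ord_decreasing_enumeration G]
      y_nonneg unfolding Pfun_eq_top_sum by blast
  also have "\<dots> \<le> slack a b xh i"
    using row unfolding slack_def by (simp add: algebra_simps)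
  finally show ?thesis .
qed

lemma Pfun_le_slack_imp_robust_primal_feasible:
  assumes G: "\<And>i. 0 \<le> G $ i" "\<And>i. G $ i \<le> real (card (Js i))"
    and Pfun_le: "\<And>i. Pfun alpha ord i (G $ i) xh \<le> slack a b xh i"
  shows "\<exists>u y z. robust_primal_feasible a alpha Js b xh G u y z"
proof -
  define \<theta> where "\<theta> i = top_threshold (\<lambda>j. alpha i j * \<bar>xh $ j\<bar>) (ord i xh) (card (Js i)) (G $ i)" for i
  define y where "y i j = max (alpha i j * \<bar>xh $ j\<bar> - \<theta> i) 0" for i j
  have "robust_primal_feasible a alpha Js b xh G (\<lambda>i j. alpha i j * \<bar>xh $ j\<bar>) y (\<chi> i. \<theta> i)"
    unfolding robust_primal_feasible_def
  proof (intro conjI allI ballI)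
    fix i j assume "j \<in> Js i"
    then have "0 \<le> alpha i j * (\<bar>xh $ j\<bar> + xh $ j)" "0 \<le> alpha i j * (\<bar>xh $ j\<bar> - xh $ j)"
      using alpha_nonneg by simp_all
    then show "0 \<le> alpha i j * xh $ j + alpha i j * \<bar>xh $ j\<bar>"
      "0 \<le> - alpha i j * xh $ j + alpha i j * \<bar>xh $ j\<bar>"
      by (simp_all add: algebra_simps)
    show "alpha i j * \<bar>xh $ j\<bar> \<le> y i j + (\<chi> i. \<theta> i) $ i"
      by (simp add: y_def)
    show "0 \<le> y i j" by (simp add: y_def)
  next
    fix i
    have "(\<Sum>j\<in>Js i. y i j) + G $ i * \<theta> i = Pfun alpha ord i (G $ i) xh"
      using decreasing_enumeration.top_sum_strong_duality[OF ord_decreasing_enumeration G]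
      unfolding y_def \<theta>_def Pfun_eq_top_sum by (simp add: mult.commute)
    then show "b $ i \<le> (\<Sum>j\<in>UNIV. a i j * xh $ j) - (\<Sum>j\<in>Js i. y i j) - G $ i * (\<chi> i. \<theta> i) $ i"
      using Pfun_le[of i] unfolding slack_def vec_lambda_beta by linarith
    show "0 \<le> (\<chi> i. \<theta> i) $ i"
      using decreasing_enumeration.top_threshold_nonneg[OF ord_decreasing_enumeration G]
      by (simp add: \<theta>_def)
  qed
  then show ?thesis by blast
qed

lemma rlo_obj_ge_weighted_sub_value:
  assumes dual: "rlo_dual_feasible a alpha Js G c pv phi lam mu"
    and G: "\<And>i. 0 \<le> G $ i" "\<And>i. G $ i \<le> real (card (Js i))"
  shows "(\<Sum>i\<in>UNIV. pv $ i * (slack a b xh i - Pfun alpha ord i (G $ i) xh)) \<le> rlo_obj b xh c pv"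
proof -
  have "(\<Sum>j\<in>Js i. alpha i j * \<bar>xh $ j\<bar> * phi i j) \<le> pv $ i * Pfun alpha ord i (G $ i) xh" for i
  proof -
    have "\<And>j. j \<in> Js i \<Longrightarrow> 0 \<le> phi i j \<and> phi i j \<le> pv $ i"
      "(\<Sum>j\<in>Js i. phi i j) \<le> G $ i * pv $ i"
      using dual unfolding rlo_dual_feasible_def by blast+
    then show ?thesis
      using decreasing_enumeration.sum_mult_le_top_sum[OF ord_decreasing_enumeration G]
      unfolding Pfun_eq_top_sum by blast
  qed
  then have "(\<Sum>i\<in>UNIV. pv $ i * (slack a b xh i - Pfun alpha ord i (G $ i) xh)) \<le>
      (\<Sum>i\<in>UNIV. pv $ i * slack a b xh i - (\<Sum>j\<in>Js i. alpha i j * \<bar>xh $ j\<bar> * phi i j))"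
    by (intro sum_mono) (simp add: right_diff_distrib)
  also have "\<dots> \<le> rlo_obj b xh c pv"
    by (rule rlo_obj_ge_weighted_slack[OF dual])
  finally show ?thesis .
qed

lemma rlo_dual_feasible_greedy:
  assumes G: "0 \<le> G $ i" "G $ i \<le> real (card (Js i))"
  shows "\<exists>phi lam mu. rlo_dual_feasible a alpha Js G (abar a alpha Js ord i (G $ i) xh) (axis i 1) phi lam mu"
proof -
  define w where "w = greedy_weight (ord i xh) (card (Js i)) (G $ i)"
  define phi where "phi k j = (if k = i then w j else 0)" for k j
  define lam where "lam k j = (if k = i \<and> xh $ j < 0 then w j else 0)" for k j
  define mu where "mu k j = (if k = i \<and> 0 \<le> xh $ j then w j else 0)" for k j
  note enum = ord_decreasing_enumeration[of i xh]
  have w_bounds: "0 \<le> w j \<and> w j \<le> 1" for j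
    unfolding w_def by (rule greedy_weight_bounds)
  have w_outside: "j \<notin> Js i \<Longrightarrow> w j = 0" for j
    unfolding w_def by (rule decreasing_enumeration.greedy_weight_outside[OF enum G])
  have w_sum: "(\<Sum>j\<in>Js i. w j) = G $ i"
    unfolding w_def by (rule decreasing_enumeration.sum_greedy_weight[OF enum G])
  have axis: "axis i (1::real) $ k = (if k = i then 1 else 0)" for k
    by (simp add: axis_def)
  have "rlo_dual_feasible a alpha Js G (abar a alpha Js ord i (G $ i) xh) (axis i 1) phi lam mu"
    unfolding rlo_dual_feasible_def
  proof (intro conjI allI ballI)
    show "(\<Sum>k\<in>UNIV. axis i 1 $ k) = (1::real)"
      by (simp add: axis_def)
  next
    fix j
    have "(\<Sum>k\<in>UNIV. a k j * axis i 1 $ k) = a i j"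
      by (simp add: axis if_distrib cong: if_cong)
    moreover have "(\<Sum>k\<in>{k. j \<in> Js k}. alpha k j * (lam k j - mu k j)) =
        (\<Sum>k\<in>{k. j \<in> Js k}. if k = i then - sgnp (xh $ j) * alpha i j * w j else 0)"
      by (rule sum.cong) (auto simp: lam_def mu_def sgnp_def)
    moreover have "\<dots> = - sgnp (xh $ j) * alpha i j * w j"
      using w_outside by (subst sum.delta) auto
    ultimately show "(\<Sum>k\<in>UNIV. a k j * axis i 1 $ k) +
        (\<Sum>k\<in>{k. j \<in> Js k}. alpha k j * (lam k j - mu k j)) = abar a alpha Js ord i (G $ i) xh $ j"
      by (simp add: abar_eq_greedy_weight w_def)
  next
    fix k j assume "j \<in> Js k"
    show "phi k j \<le> axis i 1 $ k" "phi k j = lam k j + mu k j"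
      "0 \<le> phi k j" "0 \<le> lam k j" "0 \<le> mu k j"
      using w_bounds[of j] by (auto simp: phi_def lam_def mu_def axis)
  next
    fix k
    show "(\<Sum>j\<in>Js k. phi k j) \<le> G $ k * axis i 1 $ k" "0 \<le> axis i (1::real) $ k"
      using w_sum by (simp_all add: phi_def axis)
  qed
  then show ?thesis by blast
qed

lemma rlo_obj_abar_axis:
  assumes g: "0 \<le> g" "g \<le> real (card (Js i))"
  shows "rlo_obj b xh (abar a alpha Js ord i g xh) (axis i 1) = slack a b xh i - Pfun alpha ord i g xh"
proof -
  define w where "w = greedy_weight (ord i xh) (card (Js i)) g"
  note enum = ord_decreasing_enumeration[of i xh]
  have "(\<Sum>j\<in>UNIV. alpha i j * \<bar>xh $ j\<bar> * w j) = (\<Sum>j\<in>Js i. alpha i j * \<bar>xh $ j\<bar> * w j)"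
    using decreasing_enumeration.greedy_weight_outside[OF enum g]
    by (intro sum.mono_neutral_right) (auto simp: w_def)
  also have "\<dots> = Pfun alpha ord i g xh"
    unfolding w_def Pfun_eq_top_sum by (rule decreasing_enumeration.sum_mult_greedy_weight[OF enum g])
  finally have Pfun_eq: "(\<Sum>j\<in>UNIV. alpha i j * \<bar>xh $ j\<bar> * w j) = Pfun alpha ord i g xh" .
  have "abar a alpha Js ord i g xh $ j * xh $ j = a i j * xh $ j - alpha i j * \<bar>xh $ j\<bar> * w j" for j
    by (simp add: abar_eq_greedy_weight w_def left_diff_distrib right_diff_distrib mult_ac flip: sgnp_mult_self)
  moreover have "(\<Sum>k\<in>UNIV. b $ k * axis i 1 $ k) = b $ i"
    by (simp add: axis_def if_distrib cong: if_cong)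
  ultimately show ?thesis
    using Pfun_eq by (simp add: rlo_obj_def slack_def sum_subtractf)
qed

lemma sub_obj_ge:
  assumes "sub_feasible a alpha Js b xh Omega i G phi"
  shows "slack a b xh i - Pfun alpha ord i (G $ i) xh \<le> sub_obj a alpha Js b xh i phi"
proof -
  have G: "0 \<le> G $ i" "G $ i \<le> real (card (Js i))"
    using assms Theta_bounds unfolding sub_feasible_def by blast+
  have "(\<Sum>j\<in>Js i. alpha i j * \<bar>xh $ j\<bar> * phi i j) \<le> 1 * Pfun alpha ord i (G $ i) xh"
    using assms unfolding sub_feasible_def Pfun_eq_top_sum
    by (intro decreasing_enumeration.sum_mult_le_top_sum[OF ord_decreasing_enumeration G]) auto
  then show ?thesis
    unfolding sub_obj_def slack_def by simp
qed

lemma sub_feasible_greedy: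
  assumes G: "G \<in> Theta a alpha Js b xh \<inter> Omega"
  shows "sub_feasible a alpha Js b xh Omega i G (\<lambda>_. greedy_weight (ord i xh) (card (Js i)) (G $ i))"
    and "sub_obj a alpha Js b xh i (\<lambda>_. greedy_weight (ord i xh) (card (Js i)) (G $ i)) =
      slack a b xh i - Pfun alpha ord i (G $ i) xh"
proof -
  have Gi: "0 \<le> G $ i" "G $ i \<le> real (card (Js i))"
    using G Theta_bounds by blast+
  note enum = ord_decreasing_enumeration[of i xh]
  show "sub_feasible a alpha Js b xh Omega i G (\<lambda>_. greedy_weight (ord i xh) (card (Js i)) (G $ i))"
    using G greedy_weight_bounds[of "ord i xh" "card (Js i)" "G $ i"]
      decreasing_enumeration.sum_greedy_weight[OF enum Gi]
    unfolding sub_feasible_def by simp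
  show "sub_obj a alpha Js b xh i (\<lambda>_. greedy_weight (ord i xh) (card (Js i)) (G $ i)) =
      slack a b xh i - Pfun alpha ord i (G $ i) xh"
    using decreasing_enumeration.sum_mult_greedy_weight[OF enum Gi]
    unfolding sub_obj_def slack_def Pfun_eq_top_sum by simp
qed

end

locale rlo_ccu_dg = sorted_budget_uncertainty +
  assumes unique_Gunder: "\<And>i. i \<in> Ihat a alpha Js b xh \<Longrightarrow>
      (\<forall>G\<in>{0..real (card (Js i))}. slack a b xh i = Pfun alpha ord i G xh
          \<longleftrightarrow> G = Gunder a alpha Js b xh i)"
    and xh_feasible: "\<And>i. (\<Sum>j\<in>UNIV. a i j * xh $ j) \<ge> b $ i"
begin

lemma slack_eq_Pfun_Gunder:
  assumes "i \<in> Ihat a alpha Js b xh"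
  shows "slack a b xh i = Pfun alpha ord i (Gunder a alpha Js b xh i) xh"
  using unique_Gunder[OF assms] Gunder_bounds[OF assms] by simp

lemma Theta_imp_Pfun_le_slack:
  assumes G: "G \<in> Theta a alpha Js b xh"
  shows "Pfun alpha ord i (G $ i) xh \<le> slack a b xh i"
proof (cases "i \<in> Ihat a alpha Js b xh")
  case True
  have "Pfun alpha ord i (G $ i) xh \<le> Pfun alpha ord i (Gunder a alpha Js b xh i) xh"
    using G True Theta_bounds[OF G] Gunder_bounds[OF True] unfolding Theta_def Pfun_eq_top_sum
    by (intro decreasing_enumeration.top_sum_mono[OF ord_decreasing_enumeration]) auto
  then show ?thesis
    using slack_eq_Pfun_Gunder[OF True] by simp
next
  case False
  then have "(\<Sum>j\<in>Js i. alpha i j * \<bar>xh $ j\<bar>) < slack a b xh i"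
    using xh_feasible[of i] unfolding Ihat_def slack_def by auto
  moreover have "Pfun alpha ord i (G $ i) xh \<le> (\<Sum>j\<in>Js i. alpha i j * \<bar>xh $ j\<bar>)"
    using decreasing_enumeration.top_sum_le_sum[OF ord_decreasing_enumeration] Theta_bounds[OF G]
    unfolding Pfun_eq_top_sum by blast
  ultimately show ?thesis by linarith
qed

lemma mem_Theta_iff:
  "G \<in> Theta a alpha Js b xh \<longleftrightarrow>
    (\<forall>i. 0 \<le> G $ i \<and> G $ i \<le> real (card (Js i))) \<and>
    (\<forall>i. Pfun alpha ord i (G $ i) xh \<le> slack a b xh i)"
proof
  assume "G \<in> Theta a alpha Js b xh"
  then show "(\<forall>i. 0 \<le> G $ i \<and> G $ i \<le> real (card (Js i))) \<and>
      (\<forall>i. Pfun alpha ord i (G $ i) xh \<le> slack a b xh i)"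
    using Theta_bounds Theta_imp_Pfun_le_slack by blast
next
  assume "(\<forall>i. 0 \<le> G $ i \<and> G $ i \<le> real (card (Js i))) \<and>
      (\<forall>i. Pfun alpha ord i (G $ i) xh \<le> slack a b xh i)"
  then have G: "\<And>i. 0 \<le> G $ i \<and> G $ i \<le> real (card (Js i))"
    and Pfun_le: "\<And>i. Pfun alpha ord i (G $ i) xh \<le> slack a b xh i"
    by blast+
  \<comment> \<open>a budget beyond \<open>Gunder\<close> would reach the slack a second time, contradicting uniqueness\<close>
  have "G $ i \<le> Gunder a alpha Js b xh i" if i: "i \<in> Ihat a alpha Js b xh" for i
  proof (rule ccontr)
    assume "\<not> G $ i \<le> Gunder a alpha Js b xh i"
    then have less: "Gunder a alpha Js b xh i < G $ i" by simp
    have "slack a b xh i \<le> Pfun alpha ord i (G $ i) xh"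
      unfolding slack_eq_Pfun_Gunder[OF i] Pfun_eq_top_sum
      using less G[of i] Gunder_bounds[OF i]
      by (intro decreasing_enumeration.top_sum_mono[OF ord_decreasing_enumeration]) auto
    then have "slack a b xh i = Pfun alpha ord i (G $ i) xh"
      using Pfun_le[of i] by linarith
    then have "G $ i = Gunder a alpha Js b xh i"
      using unique_Gunder[OF i] G[of i] by simp
    with less show False by simp
  qed
  then show "G \<in> Theta a alpha Js b xh"
    unfolding Theta_def using G by auto
qed

lemma rlo_feasible_imp_Theta:
  assumes "rlo_feasible a alpha Js b xh Omega G c u y z pv phi lam mu"
  shows "G \<in> Theta a alpha Js b xh \<inter> Omega"
  using assms robust_primal_feasible_imp_Pfun_le_slack mem_Theta_iff unfolding rlo_feasible_iff by blast

lemma rlo_obj_ge_sub_bound: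
  assumes feas: "rlo_feasible a alpha Js b xh Omega G c u y z pv phi lam mu"
    and bound: "\<And>i G. G \<in> Theta a alpha Js b xh \<inter> Omega \<Longrightarrow>
      v \<le> slack a b xh i - Pfun alpha ord i (G $ i) xh"
  shows "v \<le> rlo_obj b xh c pv"
proof -
  have dual: "rlo_dual_feasible a alpha Js G c pv phi lam mu"
    and G: "\<And>i. 0 \<le> G $ i" "\<And>i. G $ i \<le> real (card (Js i))"
    using feas unfolding rlo_feasible_iff by blast+
  have pv: "(\<Sum>i\<in>UNIV. pv $ i) = 1" "\<And>i. 0 \<le> pv $ i"
    using dual unfolding rlo_dual_feasible_def by blast+
  have "v = (\<Sum>i\<in>UNIV. pv $ i * v)"
    using pv(1) by (simp add: sum_distrib_right[symmetric])
  also have "\<dots> \<le> (\<Sum>i\<in>UNIV. pv $ i * (slack a b xh i - Pfun alpha ord i (G $ i) xh))"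
    by (intro sum_mono mult_left_mono) (use pv(2) bound[OF rlo_feasible_imp_Theta[OF feas]] in auto)
  also have "\<dots> \<le> rlo_obj b xh c pv"
    by (rule rlo_obj_ge_weighted_sub_value[OF dual G])
  finally show ?thesis .
qed

lemma rlo_feasible_abar_axis:
  assumes G: "G \<in> Theta a alpha Js b xh \<inter> Omega"
  shows "\<exists>u y z phi lam mu.
    rlo_feasible a alpha Js b xh Omega G (abar a alpha Js ord i (G $ i) xh) u y z (axis i 1) phi lam mu"
proof -
  have bounds: "\<And>k. 0 \<le> G $ k" "\<And>k. G $ k \<le> real (card (Js k))"
    using G Theta_bounds by blast+
  obtain u y z where "robust_primal_feasible a alpha Js b xh G u y z"
    using Pfun_le_slack_imp_robust_primal_feasible[OF bounds] G Theta_imp_Pfun_le_slack by blast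
  moreover obtain phi lam mu where
    "rlo_dual_feasible a alpha Js G (abar a alpha Js ord i (G $ i) xh) (axis i 1) phi lam mu"
    using rlo_dual_feasible_greedy bounds by blast
  ultimately show ?thesis
    using G bounds unfolding rlo_feasible_iff by blast
qed

end

theorem theorem5:
  fixes a alpha :: "'m::finite \<Rightarrow> 'n::finite \<Rightarrow> real"
    and Js :: "'m \<Rightarrow> 'n set"
    and b :: "real^'m" and xh :: "real^'n"
    and Omega :: "(real^'m) set"
    and ord :: "'m \<Rightarrow> real^'n \<Rightarrow> nat \<Rightarrow> 'n"
    and t :: "'m \<Rightarrow> real"
    and Gs :: "'m \<Rightarrow> real^'m"
    and phis :: "'m \<Rightarrow> 'm \<Rightarrow> 'n \<Rightarrow> real"
    and istar :: 'm
  assumes alpha_nonneg: "\<And>i j. j \<in> Js i \<Longrightarrow> alpha i j \<ge> 0"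
    and Omega_convex: "convex Omega"
    and ord_valid: "\<And>i x. valid_order alpha Js i x (ord i x)"
    and unique_Gunder: "\<And>i. i \<in> Ihat a alpha Js b xh \<Longrightarrow>
          (\<forall>G\<in>{0..real (card (Js i))}. slack a b xh i = Pfun alpha ord i G xh
              \<longleftrightarrow> G = Gunder a alpha Js b xh i)"
    and xh_feasible: "\<And>i. (\<Sum>j\<in>UNIV. a i j * xh $ j) \<ge> b $ i"
    and sub_opt_feas: "\<And>i. sub_feasible a alpha Js b xh Omega i (Gs i) (phis i)"
    and sub_opt_val: "\<And>i. t i = sub_obj a alpha Js b xh i (phis i)"
    and sub_opt_min: "\<And>i G phi. sub_feasible a alpha Js b xh Omega i G phi \<Longrightarrow>
          t i \<le> sub_obj a alpha Js b xh i phi"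
    and istar_argmin: "\<And>i. t istar \<le> t i"
  shows "(\<forall>G c u y z pv phi lam mu.
            rlo_feasible a alpha Js b xh Omega G c u y z pv phi lam mu \<longrightarrow>
            t istar \<le> rlo_obj b xh c pv)
       \<and> (\<exists>u y z phi lam mu.
            rlo_feasible a alpha Js b xh Omega (Gs istar)
              (abar a alpha Js ord istar (Gs istar $ istar) xh) u y z (axis istar 1) phi lam mu
          \<and> rlo_obj b xh (abar a alpha Js ord istar (Gs istar $ istar) xh) (axis istar 1) = t istar)
       \<and> ((\<forall>i. (\<exists>j\<in>Js i. \<bar>a i j\<bar> > alpha i j) \<or> (\<exists>j. j \<notin> Js i \<and> a i j \<noteq> 0)) \<longrightarrow>
            abar a alpha Js ord istar (Gs istar $ istar) xh \<noteq> 0 \<and>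
            (\<forall>i G x. 0 \<le> G \<and> G \<le> real (card (Js i)) \<longrightarrow> abar a alpha Js ord i G x \<noteq> 0))"
proof -
  interpret rlo_ccu_dg a alpha Js b xh ord
    by unfold_locales (fact alpha_nonneg, fact ord_valid, fact unique_Gunder, fact xh_feasible)
  have value_le: "t istar \<le> slack a b xh i - Pfun alpha ord i (G $ i) xh"
    if "G \<in> Theta a alpha Js b xh \<inter> Omega" for i G
    using istar_argmin[of i] sub_opt_min[OF sub_feasible_greedy(1)[where i = i, OF that]]
      sub_feasible_greedy(2)[where i = i, OF that] by linarith
  have Gs_mem: "Gs istar \<in> Theta a alpha Js b xh \<inter> Omega"
    using sub_opt_feas[of istar] unfolding sub_feasible_def by blast
  then have Gs_bounds: "0 \<le> Gs istar $ istar" "Gs istar $ istar \<le> real (card (Js istar))"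
    using Theta_bounds by blast+
  have "rlo_obj b xh (abar a alpha Js ord istar (Gs istar $ istar) xh) (axis istar 1) = t istar"
    using rlo_obj_abar_axis[OF Gs_bounds] value_le[OF Gs_mem, of istar]
      sub_obj_ge[OF sub_opt_feas[of istar]] sub_opt_val[of istar] by linarith
  moreover note rlo_feasible_abar_axis[OF Gs_mem, where i = istar]
  moreover have "t istar \<le> rlo_obj b xh c pv"
    if "rlo_feasible a alpha Js b xh Omega G c u y z pv phi lam mu" for G c u y z pv phi lam mu
    using that value_le by (rule rlo_obj_ge_sub_bound)
  moreover note abar_nonzero
  ultimately show ?thesis
    using Gs_bounds by blast
qed

end
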